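(* Let $s\ge0$, $n=2s+1$, and let $\mathcal{G}_{2s+1}\subset GL_{2s+1}(\mathbb{Z})$ be the group generated by the linear maps $\sigma_1,\dotsc,\sigma_{2s+1}$ of $\mathbb{Z}^{2s+1}$ given in coordinates $k=(k_1,\dotsc,k_{2s+1})$ by \[ \sigma_1:\ k_1\mapsto k_1,\quad k_j\mapsto k_j+k_1\ (j>1); \] \[ \sigma_i\ (2\le i\le 2s+1):\ k_{i-1}\mapsto 2k_{i-1}-k_i,\quad k_i\mapsto k_{i-1},\quad k_j\mapsto k_j\ (j\ne i-1,i). \] For nonzero $k\in\mathbb{Z}^{2s+1}$ put $\gamma=\gcd(k_1,\dotsc,k_{2s+1})$, $\alpha=\#\{i:\ k_i/\gamma\equiv1\pmod2\}$, $\delta=|2\alpha-2s-2|$ and $x_{2s+1}=k_1-k_2+k_3-\dotsb+k_{2s+1}$. Then the triple $(\gamma,\delta,x_{2s+1})$ is invariant under $\mathcal{G}_{2s+1}$: for every $g\in\mathcal{G}_{2s+1}$ and every nonzero $k$, the vectors $k$ and $gk$ have the same values of $\gamma$, $\delta$ and $x_{2s+1}$. *)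

theory Defs
  imports Main
begin

text \<open>Vectors k = (k_1,...,k_n) in Z^n are represented as int lists of length n,
  with k_i = k ! (i - 1).\<close>

definition sigma :: "nat \<Rightarrow> int list \<Rightarrow> int list" where
  "sigma i k =
     (if i = 1 then map (\<lambda>j. if j = 0 then k ! 0 else k ! j + k ! 0) [0..<length k]
      else k[i - 2 := 2 * k ! (i - 2) - k ! (i - 1), i - 1 := k ! (i - 2)])"

inductive_set Gen_group :: "nat \<Rightarrow> (int list \<Rightarrow> int list) set" for n :: nat where
  gid: "id \<in> Gen_group n"
| gsig: "g \<in> Gen_group n \<Longrightarrow> i \<in> {1..n} \<Longrightarrow> sigma i \<circ> g \<in> Gen_group n"
| ginv: "g \<in> Gen_group n \<Longrightarrow> i \<in> {1..n} \<Longrightarrow>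
           inv_into {k. length k = n} (sigma i) \<circ> g \<in> Gen_group n"

definition gamma :: "int list \<Rightarrow> int" where
  "gamma k = Gcd (set k)"

definition alpha :: "int list \<Rightarrow> nat" where
  "alpha k = card {i. i < length k \<and> (k ! i div gamma k) mod 2 = 1}"

definition delta :: "nat \<Rightarrow> int list \<Rightarrow> int" where
  "delta s k = \<bar>2 * int (alpha k) - 2 * int s - 2\<bar>"

definition altsum :: "int list \<Rightarrow> int" where
  "altsum k = (\<Sum>i<length k. (-1) ^ i * k ! i)"

end

theory Submission
  imports Defs
begin

text \<open>Each generator \<open>\<sigma>\<^sub>i\<close> is an invertible integer linear map, so it preserves the set
  of common divisors of the entries and hence \<open>\<gamma>\<close>. For \<open>i \<ge> 2\<close> it changes only the pair
  \<open>(a, b) = (k\<^sub>i\<^sub>-\<^sub>1, k\<^sub>i)\<close>, replacing it by \<open>(2a - b, a)\<close>: this keeps \<open>a - b\<close>, hence the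
  alternating sum, and swaps the parities of \<open>a/\<gamma>\<close> and \<open>b/\<gamma>\<close>, hence keeps \<open>\<alpha>\<close>.
  The generator \<open>\<sigma>\<^sub>1\<close> adds \<open>k\<^sub>1\<close> to an even number \<open>2s\<close> of entries of alternating sign,
  which keeps the alternating sum; if \<open>k\<^sub>1/\<gamma>\<close> is odd it flips the parities of those \<open>2s\<close>
  entries, turning \<open>\<alpha>\<close> into \<open>2s + 2 - \<alpha>\<close>, which changes only the sign of \<open>2\<alpha> - 2s - 2\<close>.\<close>

lemma length_sigma [simp]: "length (sigma i k) = length k"
  by (simp add: sigma_def)

lemma nth_sigma:
  assumes "1 \<le> i" "i \<le> length k" "j < length k"
  shows "sigma i k ! j =
    (if i = 1 then (if j = 0 then k ! 0 else k ! j + k ! 0)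
     else if j = i - 2 then 2 * k ! (i - 2) - k ! (i - 1)
     else if j = i - 1 then k ! (i - 2) else k ! j)"
  using assms by (auto simp: sigma_def nth_list_update)

definition sigma_inv :: "nat \<Rightarrow> int list \<Rightarrow> int list" where
  "sigma_inv i k =
     (if i = 1 then map (\<lambda>j. if j = 0 then k ! 0 else k ! j - k ! 0) [0..<length k]
      else k[i - 2 := k ! (i - 1), i - 1 := 2 * k ! (i - 1) - k ! (i - 2)])"

lemma length_sigma_inv [simp]: "length (sigma_inv i k) = length k"
  by (simp add: sigma_inv_def)

lemma nth_sigma_inv:
  assumes "1 \<le> i" "i \<le> length k" "j < length k"
  shows "sigma_inv i k ! j =
    (if i = 1 then (if j = 0 then k ! 0 else k ! j - k ! 0)
     else if j = i - 2 then k ! (i - 1)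
     else if j = i - 1 then 2 * k ! (i - 1) - k ! (i - 2) else k ! j)"
  using assms by (auto simp: sigma_inv_def nth_list_update)

lemma sigma_inv_sigma:
  assumes "1 \<le> i" "i \<le> length k"
  shows "sigma_inv i (sigma i k) = k"
proof -
  have "0 < length k"
    using assms by linarith
  with assms show ?thesis
    by (intro nth_equalityI) (auto simp: nth_sigma_inv nth_sigma)
qed

lemma sigma_sigma_inv:
  assumes "1 \<le> i" "i \<le> length k"
  shows "sigma i (sigma_inv i k) = k"
proof -
  have "0 < length k"
    using assms by linarith
  with assms show ?thesis
    by (intro nth_equalityI) (auto simp: nth_sigma_inv nth_sigma)
qed

lemma inv_into_sigma:
  assumes "i \<in> {1..n}" "length k = n"
  shows "inv_into {k. length k = n} (sigma i) k = sigma_inv i k"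
proof (rule inv_into_f_eq)
  show "inj_on (sigma i) {k. length k = n}"
    by (rule inj_on_inverseI[where g = "sigma_inv i"]) (use assms in \<open>auto simp: sigma_inv_sigma\<close>)
qed (use assms in \<open>auto simp: sigma_sigma_inv\<close>)

lemma length_Gen_group: "g \<in> Gen_group n \<Longrightarrow> length k = n \<Longrightarrow> length (g k) = n"
  by (induction arbitrary: k rule: Gen_group.induct) (auto simp: inv_into_sigma)

lemma Gen_group_invariant:
  assumes sigma_invariant: "\<And>i k. i \<in> {1..n} \<Longrightarrow> length k = n \<Longrightarrow> f (sigma i k) = f k"
  shows "g \<in> Gen_group n \<Longrightarrow> length k = n \<Longrightarrow> f (g k) = f k"
proof (induction arbitrary: k rule: Gen_group.induct)
  case (gsig g i)
  then show ?case
    using sigma_invariant length_Gen_group by simp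
next
  case (ginv g i)
  have "length (g k) = n"
    using ginv.hyps(1) ginv.prems length_Gen_group by blast
  then have "f (sigma_inv i (g k)) = f (sigma i (sigma_inv i (g k)))"
    using ginv.hyps(2) sigma_invariant by simp
  also have "\<dots> = f k"
    using \<open>length (g k) = n\<close> ginv by (simp add: sigma_sigma_inv)
  finally show ?case
    using \<open>length (g k) = n\<close> ginv.hyps(2) by (simp add: inv_into_sigma)
qed simp

lemma dvd_nth_sigma:
  assumes "1 \<le> i" "i \<le> length k" "j < length k" "\<And>j. j < length k \<Longrightarrow> d dvd k ! j"
  shows "d dvd sigma i k ! j"
proof -
  have "0 < length k"
    using assms(1,2) by linarith
  then have "d dvd k ! 0"
    by (rule assms(4))
  with assms show ?thesis
    by (auto simp: nth_sigma)
qed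

lemma dvd_nth_sigma_inv:
  assumes "1 \<le> i" "i \<le> length k" "j < length k" "\<And>j. j < length k \<Longrightarrow> d dvd k ! j"
  shows "d dvd sigma_inv i k ! j"
proof -
  have "0 < length k"
    using assms(1,2) by linarith
  then have "d dvd k ! 0"
    by (rule assms(4))
  with assms show ?thesis
    by (auto simp: nth_sigma_inv)
qed

lemma gamma_dvd_nth: "j < length k \<Longrightarrow> gamma k dvd k ! j"
  by (simp add: gamma_def Gcd_dvd)

lemma dvd_gamma_iff: "d dvd gamma k \<longleftrightarrow> (\<forall>j < length k. d dvd k ! j)"
  by (auto simp: gamma_def all_set_conv_all_nth dvd_Gcd_iff)

lemma gamma_sigma:
  assumes "1 \<le> i" "i \<le> length k"
  shows "gamma (sigma i k) = gamma k"
proof (rule zdvd_antisym_nonneg)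
  show "gamma k dvd gamma (sigma i k)"
    using assms by (simp add: dvd_gamma_iff dvd_nth_sigma gamma_dvd_nth)
  have "gamma (sigma i k) dvd gamma (sigma_inv i (sigma i k))"
    unfolding dvd_gamma_iff using assms by (auto intro!: dvd_nth_sigma_inv gamma_dvd_nth)
  then show "gamma (sigma i k) dvd gamma k"
    using assms by (simp add: sigma_inv_sigma)
qed (simp_all add: gamma_def)

lemma sum_eq_if_differ_on_pair:
  fixes f g :: "'a \<Rightarrow> 'b::ab_group_add"
  assumes "finite A" "a \<in> A" "b \<in> A" "a \<noteq> b"
    and "\<And>j. j \<in> A \<Longrightarrow> j \<noteq> a \<Longrightarrow> j \<noteq> b \<Longrightarrow> f j = g j"
    and "f a + f b = g a + g b"
  shows "sum f A = sum g A"
proof -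
  have "(\<Sum>j\<in>A. f j - g j) = (\<Sum>j\<in>{a, b}. f j - g j)"
    by (rule sum.mono_neutral_right) (use assms in auto)
  also have "\<dots> = 0"
    using assms(4,6) by (simp add: algebra_simps)
  finally show ?thesis
    by (simp add: sum_subtractf)
qed

lemma sum_alternating_signs_even: "(\<Sum>j<2 * s. (-1::int) ^ j) = 0"
  by (induction s) auto

lemma altsum_sigma:
  assumes "1 \<le> i" "i \<le> length k" "length k = 2 * s + 1"
  shows "altsum (sigma i k) = altsum k"
proof (cases "i = 1")
  case True
  have "altsum (sigma i k) = k ! 0 + (\<Sum>j<2 * s. (-1) ^ Suc j * (k ! Suc j + k ! 0))"
    using assms True by (simp add: altsum_def sum.lessThan_Suc_shift nth_sigma del: sum.lessThan_Suc)
  also have "\<dots> = k ! 0 + (\<Sum>j<2 * s. (-1) ^ Suc j * k ! Suc j) - k ! 0 * (\<Sum>j<2 * s. (-1) ^ j)"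
    by (simp add: algebra_simps sum.distrib sum_distrib_left sum_subtractf sum_negf)
  also have "\<dots> = altsum k"
    using assms by (simp add: altsum_def sum.lessThan_Suc_shift sum_alternating_signs_even
        del: sum.lessThan_Suc)
  finally show ?thesis .
next
  case False
  then have "2 \<le> i"
    using assms(1) by simp
  then show ?thesis
    unfolding altsum_def length_sigma
    by (intro sum_eq_if_differ_on_pair[where a = "i - 2" and b = "i - 1"])
      (use assms in \<open>auto simp: nth_sigma algebra_simps power_eq_if\<close>)
qed

lemma alpha_eq_sum: "int (alpha k) = (\<Sum>j<length k. of_bool (odd (k ! j div gamma k)))"
proof -
  have "{i. i < length k \<and> (k ! i div gamma k) mod 2 = 1} = {j \<in> {..<length k}. odd (k ! j div gamma k)}"
    by (auto simp: odd_iff_mod_2_eq_one)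
  then have "alpha k = card {j \<in> {..<length k}. odd (k ! j div gamma k)}"
    by (simp add: alpha_def)
  also have "int \<dots> = (\<Sum>j \<in> {j \<in> {..<length k}. odd (k ! j div gamma k)}. 1)"
    by simp
  also have "\<dots> = (\<Sum>j<length k. of_bool (odd (k ! j div gamma k)))"
    unfolding of_bool_def by (rule sum.inter_filter) simp
  finally show ?thesis .
qed

lemma odd_div_add_left:
  fixes a b c :: int
  assumes "c dvd a"
  shows "odd ((a + b) div c) \<longleftrightarrow> odd (a div c) \<noteq> odd (b div c)"
  using assms by (simp add: div_plus_div_distrib_dvd_left)

lemma odd_div_double_diff:
  fixes a b c :: int
  assumes "c dvd a" "c dvd b"
  shows "odd ((2 * a - b) div c) \<longleftrightarrow> odd (b div c)"
proof -
  have "(2 * a - b) div c = 2 * (a div c) - b div c"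
    using assms by (simp add: div_diff div_mult_swap)
  then show ?thesis
    by simp
qed

lemma alpha_sigma_swap:
  assumes "2 \<le> i" "i \<le> length k"
  shows "alpha (sigma i k) = alpha k"
proof -
  have gamma_dvd_pair: "gamma k dvd k ! (i - 2)" "gamma k dvd k ! (i - 1)"
    using assms by (simp_all add: gamma_dvd_nth)
  have "int (alpha (sigma i k)) = (\<Sum>j<length k. of_bool (odd (sigma i k ! j div gamma k)))"
    using assms by (simp add: alpha_eq_sum gamma_sigma)
  also have "\<dots> = (\<Sum>j<length k. of_bool (odd (k ! j div gamma k)))"
    by (intro sum_eq_if_differ_on_pair[where a = "i - 2" and b = "i - 1"])
      (use assms gamma_dvd_pair in \<open>auto simp: nth_sigma odd_div_double_diff\<close>)
  also have "\<dots> = int (alpha k)"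
    by (simp add: alpha_eq_sum)
  finally show ?thesis
    by simp
qed

lemma alpha_sigma_1:
  assumes "length k = 2 * s + 1"
  shows "alpha (sigma 1 k) = alpha k \<or> int (alpha (sigma 1 k)) = 2 * int s + 2 - int (alpha k)"
proof -
  define c where "c = gamma k"
  define par where "par k' j = (of_bool (odd (k' ! j div c)) :: int)" for k' j
  have alpha_par: "int (alpha k') = par k' 0 + (\<Sum>j<2 * s. par k' (Suc j))"
    if "length k' = 2 * s + 1" "gamma k' = c" for k'
    using that by (simp add: alpha_eq_sum par_def sum.lessThan_Suc_shift del: sum.lessThan_Suc)
  have c_dvd_0: "c dvd k ! 0"
    using assms by (simp add: c_def gamma_dvd_nth)
  have par_0: "par (sigma 1 k) 0 = par k 0"
    unfolding par_def using assms by (simp add: nth_sigma)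
  have par_Suc: "par (sigma 1 k) (Suc j) = (if odd (k ! 0 div c) then 1 - par k (Suc j) else par k (Suc j))"
    if "j < 2 * s" for j
    using that assms c_dvd_0 by (simp add: par_def nth_sigma odd_div_add_left add.commute[of "k ! Suc j"])
  have alpha_k: "int (alpha k) = par k 0 + (\<Sum>j<2 * s. par k (Suc j))"
    using assms by (simp add: alpha_par c_def)
  have alpha_sigma: "int (alpha (sigma 1 k)) = par k 0 + (\<Sum>j<2 * s. par (sigma 1 k) (Suc j))"
    using alpha_par[of "sigma 1 k"] assms par_0 by (simp add: c_def gamma_sigma)
  show ?thesis
  proof (cases "odd (k ! 0 div c)")
    case True
    then have "par k 0 = 1"
      by (simp add: par_def)
    with True show ?thesis
      using alpha_k alpha_sigma par_Suc by (simp add: sum_subtractf)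
  next
    case False
    then show ?thesis
      using alpha_k alpha_sigma par_Suc by (simp flip: of_nat_eq_iff)
  qed
qed

lemma delta_sigma:
  assumes "1 \<le> i" "i \<le> length k" "length k = 2 * s + 1"
  shows "delta s (sigma i k) = delta s k"
proof (cases "i = 1")
  case True
  then show ?thesis
    using alpha_sigma_1[OF assms(3)] by (auto simp: delta_def)
next
  case False
  then show ?thesis
    using assms alpha_sigma_swap by (simp add: delta_def)
qed

theorem mainTheorem6:
  fixes s n :: nat and g :: "int list \<Rightarrow> int list" and k :: "int list"
  assumes "n = 2 * s + 1"
    and "g \<in> Gen_group n"
    and "length k = n"
    and "k \<noteq> replicate n 0"
  shows "gamma (g k) = gamma k \<and> delta s (g k) = delta s k \<and> altsum (g k) = altsum k"
proof -
  have invariant: "f (g k) = f k"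
    if "\<And>i k. 1 \<le> i \<Longrightarrow> i \<le> length k \<Longrightarrow> length k = n \<Longrightarrow> f (sigma i k) = f k" for f
    using Gen_group_invariant[of n f g k] that assms(2,3) by simp
  show ?thesis
    using invariant[of gamma] invariant[of "delta s"] invariant[of altsum]
    by (simp add: assms(1) gamma_sigma delta_sigma altsum_sigma)
qed

end
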